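(* Let $\sigma$ be a term ordering on $\mathbb{T}^n$, let $F\subseteq\mathbb{Q}[x_1,\dots,x_n]$ be a set of non-zero polynomials, and let $G_\sigma$ be the reduced $\sigma$-Gröbner basis of the ideal $\langle F\rangle$. Then a prime number $p$ is $\sigma$-Pauer-lucky for $\operatorname{prim}(G_\sigma)$ if and only if $p$ is $\sigma$-good for $\langle F\rangle$.
   Context: $\mathbb{T}^n$ is the monoid of power-products in $x_1,\dots,x_n$; $\mathrm{LC}_\sigma$, $\mathrm{LM}_\sigma$ denote leading coefficient and leading monomial. For $f\in\mathbb{Q}[x_1,\dots,x_n]$, $\operatorname{den}(f)$ is the positive lcm of the denominators of its coefficients; $\operatorname{den}(G)$ is the lcm of $\operatorname{den}(g)$, $g\in G$. A prime $p$ is $\sigma$-good for an ideal $I$ with reduced $\sigma$-Gröbner basis $G_\sigma$ if $p\nmid\operatorname{den}(G_\sigma)$. For non-zero $f$, with $c$ the integer content of $f\cdot\operatorname{den}(f)$, $\operatorname{prim}(f)=c^{-1}f\cdot\operatorname{den}(f)\in\mathbb{Z}[x_1,\dots,x_n]$ and $\operatorname{prim}(G)=\{\operatorname{prim}(g):g\in G\}$. Non-zero $g_1,\dots,g_s\in\mathbb{Z}[x_1,\dots,x_n]$ form a strong $\sigma$-Gröbner basis of $\langle g_1,\dots,g_s\rangle$ if for every non-zero $f$ in this ideal some $\mathrm{LM}_\sigma(g_i)$ divides $\mathrm{LM}_\sigma(f)$; it is minimal if moreover $\mathrm{LM}_\sigma(g_i)\nmid\mathrm{LM}_\sigma(g_j)$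 for $i\neq j$. Given a set $F'$ of non-zero polynomials in $\mathbb{Z}[x_1,\dots,x_n]$ and a minimal strong $\sigma$-Gröbner basis $\tilde G$ of $\langle F'\rangle\subseteq\mathbb{Z}[x_1,\dots,x_n]$, a prime $p$ is $\sigma$-Pauer-lucky for $F'$ if $p$ divides the leading coefficient of no polynomial in $\tilde G$ (this does not depend on the choice of $\tilde G$). *)

theory Defs
  imports Complex_Main "HOL-Library.Poly_Mapping" "HOL-Computational_Algebra.Primes"
begin

type_synonym pp = "nat \<Rightarrow>\<^sub>0 nat"
type_synonym 'a mpoly = "pp \<Rightarrow>\<^sub>0 'a"

text \<open>The monoid T^n of power-products in x_1..x_n (here indexed 0..n-1).\<close>
definition PP :: "nat \<Rightarrow> pp set" where
  "PP n = {t. Poly_Mapping.keys t \<subseteq> {..<n}}"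

definition polys :: "nat \<Rightarrow> ('a::zero) mpoly set" where
  "polys n = {f. Poly_Mapping.keys f \<subseteq> PP n}"

definition pp_dvd :: "pp \<Rightarrow> pp \<Rightarrow> bool" where
  "pp_dvd s t \<longleftrightarrow> (\<forall>i. Poly_Mapping.lookup s i \<le> Poly_Mapping.lookup t i)"

text \<open>A term ordering on T^n (ord s t means s \<le> t): a total order, compatible with
  multiplication, with 1 the least element.\<close>
definition term_order :: "nat \<Rightarrow> (pp \<Rightarrow> pp \<Rightarrow> bool) \<Rightarrow> bool" where
  "term_order n ord \<longleftrightarrow>
     (\<forall>t\<in>PP n. ord t t) \<and>
     (\<forall>s\<in>PP n. \<forall>t\<in>PP n. ord s t \<and> ord t s \<longrightarrow> s = t) \<and>
     (\<forall>s\<in>PP n. \<forall>t\<in>PP n. \<forall>u\<in>PP n. ord s t \<and> ord t u \<longrightarrow> ord s u) \<and>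
     (\<forall>s\<in>PP n. \<forall>t\<in>PP n. ord s t \<or> ord t s) \<and>
     (\<forall>s\<in>PP n. \<forall>t\<in>PP n. \<forall>u\<in>PP n. ord s t \<longrightarrow> ord (s + u) (t + u)) \<and>
     (\<forall>t\<in>PP n. ord 0 t)"

definition lt :: "(pp \<Rightarrow> pp \<Rightarrow> bool) \<Rightarrow> ('a::zero) mpoly \<Rightarrow> pp" where
  "lt ord f = (THE t. t \<in> Poly_Mapping.keys f \<and> (\<forall>s\<in>Poly_Mapping.keys f. ord s t))"

definition lc :: "(pp \<Rightarrow> pp \<Rightarrow> bool) \<Rightarrow> ('a::zero) mpoly \<Rightarrow> 'a" where
  "lc ord f = Poly_Mapping.lookup f (lt ord f)"

definition lm_dvd :: "(pp \<Rightarrow> pp \<Rightarrow> bool) \<Rightarrow> ('a::comm_semiring_1) mpoly \<Rightarrow> 'a mpoly \<Rightarrow> bool" where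
  "lm_dvd ord g f \<longleftrightarrow> lc ord g dvd lc ord f \<and> pp_dvd (lt ord g) (lt ord f)"

inductive_set ideal_gen :: "nat \<Rightarrow> ('a::comm_ring_1) mpoly set \<Rightarrow> 'a mpoly set"
  for n F where
  zero: "0 \<in> ideal_gen n F"
| step: "a \<in> ideal_gen n F \<Longrightarrow> h \<in> polys n \<Longrightarrow> f \<in> F \<Longrightarrow> a + h * f \<in> ideal_gen n F"

definition strong_GB :: "nat \<Rightarrow> (pp \<Rightarrow> pp \<Rightarrow> bool) \<Rightarrow> ('a::comm_ring_1) mpoly set \<Rightarrow> 'a mpoly set \<Rightarrow> bool" where
  "strong_GB n ord G I \<longleftrightarrow> finite G \<and> 0 \<notin> G \<and> G \<subseteq> polys n \<and> ideal_gen n G = I \<and>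
     (\<forall>f\<in>I. f \<noteq> 0 \<longrightarrow> (\<exists>g\<in>G. lm_dvd ord g f))"

definition minimal_strong_GB :: "nat \<Rightarrow> (pp \<Rightarrow> pp \<Rightarrow> bool) \<Rightarrow> ('a::comm_ring_1) mpoly set \<Rightarrow> 'a mpoly set \<Rightarrow> bool" where
  "minimal_strong_GB n ord G I \<longleftrightarrow> strong_GB n ord G I \<and>
     (\<forall>g\<in>G. \<forall>g'\<in>G. g \<noteq> g' \<longrightarrow> \<not> lm_dvd ord g g')"

definition reduced_GB :: "nat \<Rightarrow> (pp \<Rightarrow> pp \<Rightarrow> bool) \<Rightarrow> ('a::field) mpoly set \<Rightarrow> 'a mpoly set \<Rightarrow> bool" where
  "reduced_GB n ord G I \<longleftrightarrow> strong_GB n ord G I \<and> (\<forall>g\<in>G. lc ord g = 1) \<and>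
     (\<forall>g\<in>G. \<forall>g'\<in>G. g \<noteq> g' \<longrightarrow> (\<forall>t\<in>Poly_Mapping.keys g. \<not> pp_dvd (lt ord g') t))"

definition den :: "rat mpoly \<Rightarrow> int" where
  "den f = Lcm ((\<lambda>t. snd (quotient_of (Poly_Mapping.lookup f t))) ` Poly_Mapping.keys f)"

definition den_set :: "rat mpoly set \<Rightarrow> int" where
  "den_set G = Lcm (den ` G)"

definition the_int :: "rat \<Rightarrow> int" where
  "the_int x = (THE k. of_int k = x)"

definition icontent :: "rat mpoly \<Rightarrow> int" where
  "icontent f = Gcd ((\<lambda>t. the_int (of_int (den f) * Poly_Mapping.lookup f t)) ` Poly_Mapping.keys f)"

definition prim :: "rat mpoly \<Rightarrow> int mpoly" where
  "prim f = Poly_Mapping.map (\<lambda>a. the_int (of_int (den f) * a / of_int (icontent f))) f"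

definition sigma_good :: "rat mpoly set \<Rightarrow> nat \<Rightarrow> bool" where
  "sigma_good G p \<longleftrightarrow> \<not> int p dvd den_set G"

definition pauer_lucky :: "nat \<Rightarrow> (pp \<Rightarrow> pp \<Rightarrow> bool) \<Rightarrow> int mpoly set \<Rightarrow> nat \<Rightarrow> bool" where
  "pauer_lucky n ord F' p \<longleftrightarrow>
     (\<exists>Gt. minimal_strong_GB n ord Gt (ideal_gen n F') \<and> (\<forall>g\<in>Gt. \<not> int p dvd lc ord g))"

end

theory Submission
  imports Defs "HOL-Library.Ramsey"
begin

text \<open>Let J be the ideal of \<open>\<int>[x]\<close> generated by prim(G). Clearing denominators shows that J
  and the rational ideal \<open>\<langle>G\<rangle>\<close> have the same leading terms. A minimal strong basis of J can be
  built from the least positive leading coefficients d(T) of elements of J with leading term T.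
  If lt(g) divides T for some g in G, then a shift of prim(g) lies in J with leading term T and
  leading coefficient den(g)/content(g), so d(T) divides den(g); hence p \<open>\<nmid>\<close> den(G) makes p
  Pauer-lucky. Conversely, if the leading coefficients of a minimal strong basis of J are prime to p,
  every leading term of \<open>\<langle>G\<rangle>\<close> is the leading term of a monic element of \<open>\<langle>G\<rangle>\<close> with p-integral
  coefficients. Reducing by these, an element of \<open>\<langle>G\<rangle>\<close> is p-integral as soon as its coefficients
  at leading terms are. A reduced basis element g has coefficient 1 at lt(g) and 0 at every other
  leading term, so p \<open>\<nmid>\<close> den(g).\<close>

abbreviation lookup :: "('a \<Rightarrow>\<^sub>0 'b::zero) \<Rightarrow> 'a \<Rightarrow> 'b" where
  "lookup \<equiv> Poly_Mapping.lookup"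

abbreviation keys :: "('a \<Rightarrow>\<^sub>0 'b::zero) \<Rightarrow> 'a set" where
  "keys \<equiv> Poly_Mapping.keys"

abbreviation monomial :: "'b::zero \<Rightarrow> 'a \<Rightarrow> ('a \<Rightarrow>\<^sub>0 'b)" where
  "monomial c s \<equiv> Poly_Mapping.single s c"

lemma pp_dvd_iff: "pp_dvd s t \<longleftrightarrow> (\<exists>u. t = s + u)"
proof
  assume "pp_dvd s t"
  then have "t = s + (t - s)"
    by (auto simp: pp_dvd_def poly_mapping_eq_iff lookup_add lookup_minus fun_eq_iff)
  then show "\<exists>u. t = s + u" by blast
qed (auto simp: pp_dvd_def lookup_add)

lemma pp_dvd_refl: "pp_dvd t t"
  by (simp add: pp_dvd_def)

lemma pp_dvd_trans: "pp_dvd s t \<Longrightarrow> pp_dvd t u \<Longrightarrow> pp_dvd s u"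
  unfolding pp_dvd_def using le_trans by blast

lemma PP_zero [simp]: "0 \<in> PP n"
  by (simp add: PP_def)

lemma PP_add: "s \<in> PP n \<Longrightarrow> t \<in> PP n \<Longrightarrow> s + t \<in> PP n"
  unfolding PP_def using keys_add[of s t] by auto

lemma PP_add_rightD: "s + u \<in> PP n \<Longrightarrow> u \<in> PP n"
  unfolding PP_def by (auto simp: in_keys_iff lookup_add subset_iff)

lemma PP_add_leftD: "s + u \<in> PP n \<Longrightarrow> s \<in> PP n"
  using PP_add_rightD[of u s n] by (simp add: add.commute)

lemma lookup_monomial_mult:
  "lookup (monomial c s * f) k = (if \<exists>u. k = s + u then c * lookup f (k - s) else 0)"
  for f :: "'a::comm_ring_1 mpoly"
proof -
  have "lookup (monomial c s * f) k = Sum_any (\<lambda>l. (c when s = l) * Sum_any (\<lambda>q. lookup f q when k = l + q))"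
    by (simp add: lookup_mult lookup_single)
  also have "\<dots> = Sum_any (\<lambda>l. (c * Sum_any (\<lambda>q. lookup f q when k = s + q)) when s = l)"
    by (rule Sum_any.cong) (simp add: when_def)
  also have "\<dots> = c * Sum_any (\<lambda>q. lookup f q when k = s + q)"
    by simp
  also have "\<dots> = (if \<exists>u. k = s + u then c * lookup f (k - s) else 0)"
  proof (cases "\<exists>u. k = s + u")
    case True
    then obtain u where u: "k = s + u" by blast
    then have "(\<lambda>q. lookup f q when k = s + q) = (\<lambda>q. lookup f u when u = q)"
      by (auto simp: when_def fun_eq_iff)
    then show ?thesis using u by simp
  next
    case False
    then have "(\<lambda>q. lookup f q when k = s + q) = (\<lambda>q. 0)"
      by (auto simp: when_def fun_eq_iff)
    then show ?thesis using False by simp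
  qed
  finally show ?thesis .
qed

lemma lookup_monomial_mult_add [simp]:
  "lookup (monomial c s * f) (s + k) = c * lookup f k"
  for f :: "'a::comm_ring_1 mpoly"
  by (simp add: lookup_monomial_mult)

lemma lookup_const_mult [simp]:
  "lookup (monomial c 0 * f) k = c * lookup f k"
  for f :: "'a::comm_ring_1 mpoly"
  using lookup_monomial_mult_add[of 0 c f k] by simp

lemma keys_monomial_mult:
  "keys (monomial c s * f) \<subseteq> (\<lambda>t. s + t) ` keys f"
  for f :: "'a::comm_ring_1 mpoly"
proof
  fix k assume "k \<in> keys (monomial c s * f)"
  then obtain u where "k = s + u" "c * lookup f u \<noteq> 0"
    by (auto simp: in_keys_iff lookup_monomial_mult split: if_splits)
  then show "k \<in> (\<lambda>t. s + t) ` keys f"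
    by (intro image_eqI[of _ _ u]) (auto simp: in_keys_iff)
qed

lemma keys_const_mult: "keys (monomial c 0 * f) \<subseteq> keys f"
  for f :: "'a::comm_ring_1 mpoly"
  using keys_monomial_mult[of 0 c f] by simp

lemma polys_zero [simp]: "0 \<in> polys n"
  by (simp add: polys_def)

lemma polys_one [simp]: "(1 :: 'a::comm_ring_1 mpoly) \<in> polys n"
  by (simp add: polys_def)

lemma polys_monomial: "s \<in> PP n \<Longrightarrow> monomial c s \<in> polys n"
  by (simp add: polys_def)

lemma polys_add: "f \<in> polys n \<Longrightarrow> g \<in> polys n \<Longrightarrow> f + g \<in> polys n"
  using keys_add[of f g] by (auto simp: polys_def)

lemma polys_diff: "f \<in> polys n \<Longrightarrow> g \<in> polys n \<Longrightarrow> f - g \<in> polys n"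
  for f g :: "'a::ab_group_add mpoly"
  using keys_diff[of f g] by (auto simp: polys_def)

lemma polys_uminus: "f \<in> polys n \<Longrightarrow> - f \<in> polys n"
  for f :: "'a::ab_group_add mpoly"
  by (simp add: polys_def)

lemma polys_mult: "f \<in> polys n \<Longrightarrow> g \<in> polys n \<Longrightarrow> f * g \<in> polys n"
  for f g :: "'a::comm_ring_1 mpoly"
  using keys_mult[of f g] PP_add unfolding polys_def by blast

lemma ideal_gen_add:
  assumes "a \<in> ideal_gen n B" "b \<in> ideal_gen n B"
  shows "a + b \<in> ideal_gen n B"
  using assms(2)
proof (induction b rule: ideal_gen.induct)
  case zero
  then show ?case using assms(1) by simp
next
  case (step b h f)
  then have "(a + b) + h * f \<in> ideal_gen n B" by (intro ideal_gen.step)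
  then show ?case by (simp add: add.assoc)
qed

lemma ideal_gen_mult:
  assumes "a \<in> ideal_gen n B" "h \<in> polys n"
  shows "h * a \<in> ideal_gen n B"
  using assms(1)
proof (induction a rule: ideal_gen.induct)
  case zero
  then show ?case by (simp add: ideal_gen.zero)
next
  case (step a h' f)
  then have "h * a + (h * h') * f \<in> ideal_gen n B"
    using assms(2) by (intro ideal_gen.step polys_mult)
  then show ?case by (simp add: algebra_simps)
qed

lemma ideal_gen_diff:
  assumes "a \<in> ideal_gen n B" "b \<in> ideal_gen n B"
  shows "a - b \<in> ideal_gen n B"
proof -
  have "a + (- 1) * b \<in> ideal_gen n B"
    using assms by (intro ideal_gen_add ideal_gen_mult polys_uminus polys_one)
  then show ?thesis by simp
qed

lemma ideal_gen_uminus: "a \<in> ideal_gen n B \<Longrightarrow> - a \<in> ideal_gen n B"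
  using ideal_gen_diff[OF ideal_gen.zero] by fastforce

lemma ideal_gen_base: "f \<in> B \<Longrightarrow> f \<in> ideal_gen n B"
  using ideal_gen.step[OF ideal_gen.zero polys_one] by fastforce

lemma ideal_gen_subset_polys:
  assumes "B \<subseteq> polys n"
  shows "ideal_gen n B \<subseteq> polys n"
proof
  fix a assume "a \<in> ideal_gen n B"
  then show "a \<in> polys n"
    by (induction a rule: ideal_gen.induct) (use assms in \<open>auto intro: polys_add polys_mult\<close>)
qed

lemma ideal_gen_subset:
  assumes "B \<subseteq> ideal_gen n B'"
  shows "ideal_gen n B \<subseteq> ideal_gen n B'"
proof
  fix a assume "a \<in> ideal_gen n B"
  then show "a \<in> ideal_gen n B'"
  proof (induction a rule: ideal_gen.induct)
    case zero
    show ?case by (rule ideal_gen.zero)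
  next
    case (step a h f)
    then show ?case using assms by (blast intro: ideal_gen_add ideal_gen_mult)
  qed
qed

section \<open>Dickson's lemma\<close>

lemma exists_nondecreasing_pair:
  fixes g :: "nat \<Rightarrow> nat"
  assumes "infinite Y"
  shows "\<exists>i\<in>Y. \<exists>j\<in>Y. i < j \<and> g i \<le> g j"
proof -
  obtain y where "y \<in> Y" using assms by (metis finite.emptyI ex_in_conv)
  then obtain i where i: "i \<in> Y" "\<forall>j\<in>Y. g i \<le> g j"
    using ex_has_least_nat[of "\<lambda>x. x \<in> Y" y g] by blast
  obtain j where "j \<in> Y" "i < j" using assms by (meson infinite_nat_iff_unbounded)
  then show ?thesis using i by blast
qed

lemma infinite_subset_mono:
  fixes g :: "nat \<Rightarrow> nat"
  assumes "infinite H"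
  shows "\<exists>H'\<subseteq>H. infinite H' \<and> (\<forall>i\<in>H'. \<forall>j\<in>H'. i < j \<longrightarrow> g i \<le> g j)"
proof -
  define c where "c X = (if \<exists>i j. X = {i, j} \<and> i < j \<and> g i \<le> g j then 0 else 1::nat)" for X
  have c_iff: "c {i, j} = 0 \<longleftrightarrow> g i \<le> g j" if "i < j" for i j
    using that by (auto simp: c_def doubleton_eq_iff)
  have "\<forall>x\<in>H. \<forall>y\<in>H. x \<noteq> y \<longrightarrow> c {x, y} < 2" by (simp add: c_def)
  from Ramsey2[OF assms this] obtain Y t where Y: "Y \<subseteq> H" "infinite Y"
    "\<forall>x\<in>Y. \<forall>y\<in>Y. x \<noteq> y \<longrightarrow> c {x, y} = t" by blast
  obtain i j where ij: "i \<in> Y" "j \<in> Y" "i < j" "g i \<le> g j"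
    using exists_nondecreasing_pair[OF Y(2)] by blast
  then have "t = 0" using Y(3) c_iff[OF ij(3)] by (metis less_irrefl)
  then have "g i \<le> g j" if "i \<in> Y" "j \<in> Y" "i < j" for i j
    using Y(3) that c_iff[OF that(3)] by (metis less_irrefl)
  then show ?thesis using Y(1,2) by blast
qed

lemma dickson_coordinates:
  fixes F :: "nat \<Rightarrow> pp"
  assumes "infinite H"
  shows "\<exists>H'\<subseteq>H. infinite H' \<and>
    (\<forall>i\<in>H'. \<forall>j\<in>H'. i < j \<longrightarrow> (\<forall>k<m. lookup (F i) k \<le> lookup (F j) k))"
proof (induction m)
  case 0
  then show ?case using assms by blast
next
  case (Suc m)
  then obtain H1 where H1: "H1 \<subseteq> H" "infinite H1"
    "\<forall>i\<in>H1. \<forall>j\<in>H1. i < j \<longrightarrow> (\<forall>k<m. lookup (F i) k \<le> lookup (F j) k)" by auto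
  obtain H2 where H2: "H2 \<subseteq> H1" "infinite H2"
    "\<forall>i\<in>H2. \<forall>j\<in>H2. i < j \<longrightarrow> lookup (F i) m \<le> lookup (F j) m"
    using infinite_subset_mono[OF H1(2), of "\<lambda>i. lookup (F i) m"] by blast
  have "lookup (F i) k \<le> lookup (F j) k" if "i \<in> H2" "j \<in> H2" "i < j" "k < Suc m" for i j k
  proof (cases "k = m")
    case True
    then show ?thesis using H2(3) that(1-3) by blast
  next
    case False
    then have "k < m" using that(4) by simp
    then show ?thesis using H1(3) H2(1) that(1-3) by blast
  qed
  then show ?case using H1(1) H2(1,2) by (intro exI[of _ H2]) blast
qed

lemma dickson:
  fixes F :: "nat \<Rightarrow> pp"
  assumes "infinite H" and "\<And>i. F i \<in> PP n"
  shows "\<exists>H'\<subseteq>H. infinite H' \<and> (\<forall>i\<in>H'. \<forall>j\<in>H'. i < j \<longrightarrow> pp_dvd (F i) (F j))"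
proof -
  obtain H' where H': "H' \<subseteq> H" "infinite H'"
    "\<forall>i\<in>H'. \<forall>j\<in>H'. i < j \<longrightarrow> (\<forall>k<n. lookup (F i) k \<le> lookup (F j) k)"
    using dickson_coordinates[OF assms(1), where F = F and m = n] by auto
  have beyond: "lookup (F i) k = 0" if "\<not> k < n" for i k
    using assms(2)[of i] that by (auto simp: PP_def in_keys_iff)
  have "pp_dvd (F i) (F j)" if "i \<in> H'" "j \<in> H'" "i < j" for i j
    unfolding pp_dvd_def
  proof
    fix k
    show "lookup (F i) k \<le> lookup (F j) k"
      using H'(3) that beyond[of k i] by (cases "k < n") auto
  qed
  then show ?thesis using H'(1,2) by blast
qed

locale term_ord =
  fixes n :: nat and ord :: "pp \<Rightarrow> pp \<Rightarrow> bool"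
  assumes term_order: "term_order n ord"
begin

lemma ord_refl: "t \<in> PP n \<Longrightarrow> ord t t"
  using term_order unfolding term_order_def by blast

lemma ord_antisym: "s \<in> PP n \<Longrightarrow> t \<in> PP n \<Longrightarrow> ord s t \<Longrightarrow> ord t s \<Longrightarrow> s = t"
  using term_order unfolding term_order_def by blast

lemma ord_trans: "s \<in> PP n \<Longrightarrow> t \<in> PP n \<Longrightarrow> u \<in> PP n \<Longrightarrow> ord s t \<Longrightarrow> ord t u \<Longrightarrow> ord s u"
  using term_order unfolding term_order_def by blast

lemma ord_total: "s \<in> PP n \<Longrightarrow> t \<in> PP n \<Longrightarrow> ord s t \<or> ord t s"
  using term_order unfolding term_order_def by blast

lemma ord_add_left: "s \<in> PP n \<Longrightarrow> t \<in> PP n \<Longrightarrow> u \<in> PP n \<Longrightarrow> ord s t \<Longrightarrow> ord (u + s) (u + t)"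
  using term_order unfolding term_order_def by (metis add.commute)

lemma ord_zero: "t \<in> PP n \<Longrightarrow> ord 0 t"
  using term_order unfolding term_order_def by blast

lemma ord_of_pp_dvd: "pp_dvd s t \<Longrightarrow> t \<in> PP n \<Longrightarrow> ord s t"
proof -
  assume "pp_dvd s t" "t \<in> PP n"
  then obtain u where u: "t = s + u" using pp_dvd_iff by blast
  then have "s \<in> PP n" "u \<in> PP n" using \<open>t \<in> PP n\<close> PP_add_leftD PP_add_rightD by blast+
  then show "ord s t" using u ord_add_left[of 0 u s] ord_zero[of u] by simp
qed

definition less_ord :: "pp \<Rightarrow> pp \<Rightarrow> bool" where
  "less_ord s t \<longleftrightarrow> ord s t \<and> s \<noteq> t"

lemma less_ord_trans:
  "s \<in> PP n \<Longrightarrow> t \<in> PP n \<Longrightarrow> u \<in> PP n \<Longrightarrow> less_ord s t \<Longrightarrow> less_ord t u \<Longrightarrow> less_ord s u"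
  unfolding less_ord_def using ord_trans ord_antisym by blast

lemma less_ord_iff_not_ord: "s \<in> PP n \<Longrightarrow> t \<in> PP n \<Longrightarrow> less_ord s t \<longleftrightarrow> \<not> ord t s"
  unfolding less_ord_def using ord_total ord_antisym ord_refl by blast

definition less_ord_rel :: "(pp \<times> pp) set" where
  "less_ord_rel = {(s, t). s \<in> PP n \<and> t \<in> PP n \<and> less_ord s t}"

text \<open>A strictly descending chain has, by Dickson's lemma, two members that divide one another
  in the wrong direction.\<close>
lemma wf_less_ord_rel: "wf less_ord_rel"
proof (rule ccontr)
  assume "\<not> wf less_ord_rel"
  then obtain F where F: "\<And>i. (F (Suc i), F i) \<in> less_ord_rel"
    unfolding wf_iff_no_infinite_down_chain by blast
  have F_PP: "F i \<in> PP n" for i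
    using F[of i] unfolding less_ord_rel_def by auto
  have descending: "less_ord (F j) (F i)" if "i < j" for i j
    using that
  proof (induction j)
    case (Suc j)
    have step: "less_ord (F (Suc j)) (F j)" using F[of j] unfolding less_ord_rel_def by auto
    show ?case
    proof (cases "i = j")
      case False
      then have "less_ord (F j) (F i)" using Suc by simp
      then show ?thesis using less_ord_trans[OF F_PP F_PP F_PP step] by blast
    qed (use step in simp)
  qed simp
  obtain H where H: "infinite H" "\<forall>i\<in>H. \<forall>j\<in>H. i < j \<longrightarrow> pp_dvd (F i) (F j)"
    using dickson[of UNIV F n] F_PP by blast
  obtain i where "i \<in> H" using H(1) by (metis ex_in_conv finite.emptyI)
  moreover obtain j where "j \<in> H" "i < j" using H(1) infinite_nat_iff_unbounded by blast
  ultimately have "ord (F i) (F j)" using H(2) ord_of_pp_dvd F_PP by blast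
  then show False using descending[OF \<open>i < j\<close>] less_ord_iff_not_ord F_PP by blast
qed

lemma finite_has_ord_max:
  assumes "finite S" "S \<noteq> {}" "S \<subseteq> PP n"
  shows "\<exists>t\<in>S. \<forall>s\<in>S. ord s t"
  using assms
proof (induction S rule: finite_ne_induct)
  case (singleton x)
  then show ?case using ord_refl by auto
next
  case (insert x S)
  then obtain t where t: "t \<in> S" "\<forall>s\<in>S. ord s t" by auto
  show ?case
  proof (cases "ord x t")
    case True
    then show ?thesis using t by auto
  next
    case False
    have PP: "x \<in> PP n" "t \<in> PP n" "S \<subseteq> PP n" using insert t by auto
    then have "ord t x" using ord_total False by blast
    then have "\<forall>s\<in>S. ord s x" using t PP ord_trans by blast
    then show ?thesis using ord_refl PP by auto
  qed
qed

lemma lt_max_key: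
  assumes "f \<in> polys n" "f \<noteq> 0"
  shows "lt ord f \<in> keys f" "\<forall>s\<in>keys f. ord s (lt ord f)"
proof -
  have f_PP: "keys f \<subseteq> PP n" using assms(1) by (simp add: polys_def)
  obtain t where t: "t \<in> keys f" "\<forall>s\<in>keys f. ord s t"
    using finite_has_ord_max[of "keys f"] f_PP assms(2) by auto
  have "\<exists>!t. t \<in> keys f \<and> (\<forall>s\<in>keys f. ord s t)"
    using t f_PP ord_antisym by (intro ex1I[of _ t]) blast+
  then have "lt ord f \<in> keys f \<and> (\<forall>s\<in>keys f. ord s (lt ord f))"
    unfolding lt_def by (rule theI')
  then show "lt ord f \<in> keys f" "\<forall>s\<in>keys f. ord s (lt ord f)" by auto
qed

lemma ord_lt: "f \<in> polys n \<Longrightarrow> s \<in> keys f \<Longrightarrow> ord s (lt ord f)"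
  using lt_max_key(2) by fastforce

lemma lt_PP: "f \<in> polys n \<Longrightarrow> f \<noteq> 0 \<Longrightarrow> lt ord f \<in> PP n"
  using lt_max_key(1) by (auto simp: polys_def)

lemma lc_nonzero: "f \<in> polys n \<Longrightarrow> f \<noteq> 0 \<Longrightarrow> lc ord f \<noteq> 0"
  using lt_max_key(1) unfolding lc_def by (simp add: in_keys_iff)

lemma lt_eqI:
  assumes "f \<in> polys n" "lookup f t \<noteq> 0" "\<forall>s\<in>keys f. ord s t"
  shows "lt ord f = t"
proof -
  have t: "t \<in> keys f" "f \<noteq> 0" using assms(2) by (auto simp: in_keys_iff)
  have PP: "keys f \<subseteq> PP n" using assms(1) by (simp add: polys_def)
  have lt: "lt ord f \<in> keys f" "ord t (lt ord f)" using lt_max_key[OF assms(1) t(2)] t(1) by auto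
  have "ord (lt ord f) t" using assms(3) lt(1) by blast
  then show ?thesis using ord_antisym[of "lt ord f" t] lt t(1) PP by blast
qed

lemma lt_monomial_mult:
  fixes f :: "'a::idom mpoly"
  assumes "f \<in> polys n" "f \<noteq> 0" "s \<in> PP n" "c \<noteq> 0"
  shows "monomial c s * f \<noteq> 0" "lt ord (monomial c s * f) = s + lt ord f"
    "lc ord (monomial c s * f) = c * lc ord f"
proof -
  let ?g = "monomial c s * f"
  have lookup_lt: "lookup ?g (s + lt ord f) = c * lc ord f" by (simp add: lc_def)
  then have "lookup ?g (s + lt ord f) \<noteq> 0" using lc_nonzero assms by simp
  then show "?g \<noteq> 0" by (metis lookup_zero)
  have "\<forall>k\<in>keys ?g. ord k (s + lt ord f)"
  proof
    fix k assume "k \<in> keys ?g"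
    then obtain t where "t \<in> keys f" "k = s + t" using keys_monomial_mult by blast
    then show "ord k (s + lt ord f)"
      using ord_add_left[of t "lt ord f" s] ord_lt lt_PP assms by (auto simp: polys_def)
  qed
  then show lt: "lt ord ?g = s + lt ord f"
    using lt_eqI \<open>lookup ?g (s + lt ord f) \<noteq> 0\<close> polys_mult polys_monomial assms by blast
  show "lc ord ?g = c * lc ord f" using lookup_lt lt by (simp add: lc_def)
qed

lemma lt_diff_less:
  fixes f h :: "'a::ab_group_add mpoly"
  assumes "f \<in> polys n" "h \<in> polys n" "f \<noteq> 0" "h \<noteq> 0"
    and "lt ord h = lt ord f" "lc ord h = lc ord f"
  shows "f - h = 0 \<or> less_ord (lt ord (f - h)) (lt ord f)"
proof (cases "f - h = 0")
  case False
  have lt_in: "lt ord (f - h) \<in> keys (f - h)"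
    using lt_max_key(1) polys_diff assms(1,2) False by blast
  then have "ord (lt ord (f - h)) (lt ord f)"
    using keys_diff[of f h] ord_lt assms by (metis UnE subsetD)
  moreover have "lookup (f - h) (lt ord f) = 0"
    using assms(5,6) by (simp add: lookup_minus lc_def)
  then have "lt ord (f - h) \<noteq> lt ord f" using lt_in by (auto simp: in_keys_iff)
  ultimately show ?thesis unfolding less_ord_def by blast
qed simp

lemma lt_induct [consumes 1, case_names zero less]:
  fixes f :: "'a::zero mpoly"
  assumes "f \<in> polys n"
    and "P 0"
    and "\<And>f. f \<in> polys n \<Longrightarrow> f \<noteq> 0 \<Longrightarrow>
           (\<And>g. g \<in> polys n \<Longrightarrow> g = 0 \<or> less_ord (lt ord g) (lt ord f) \<Longrightarrow> P g) \<Longrightarrow> P f"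
  shows "P f"
proof -
  have "\<forall>f :: 'a mpoly. f \<in> polys n \<and> f \<noteq> 0 \<and> lt ord f = T \<longrightarrow> P f" for T
  proof (induction T rule: wf_induct[OF wf_less_ord_rel])
    case (1 T)
    show ?case
    proof (intro allI impI)
      fix f :: "'a mpoly" assume f: "f \<in> polys n \<and> f \<noteq> 0 \<and> lt ord f = T"
      show "P f"
      proof (rule assms(3))
        fix g :: "'a mpoly" assume "g \<in> polys n" "g = 0 \<or> less_ord (lt ord g) (lt ord f)"
        then show "P g"
          using 1 f assms(2) lt_PP unfolding less_ord_rel_def by blast
      qed (use f in auto)
    qed
  qed
  then show ?thesis using assms(1,2) by blast
qed

text \<open>Divide by the basis element whose leading monomial divides the leading monomial, and
  induct on the leading term.\<close>
lemma ideal_gen_strong_basis: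
  fixes B G :: "'a::idom mpoly set"
  assumes B: "B \<subseteq> polys n" and G: "G \<subseteq> ideal_gen n B"
    and strong: "\<And>f. f \<in> ideal_gen n B \<Longrightarrow> f \<noteq> 0 \<Longrightarrow> \<exists>g\<in>G. g \<noteq> 0 \<and> lm_dvd ord g f"
  shows "ideal_gen n G = ideal_gen n B"
proof
  show "ideal_gen n G \<subseteq> ideal_gen n B" using ideal_gen_subset[OF G] .
  have J_polys: "ideal_gen n B \<subseteq> polys n" using ideal_gen_subset_polys[OF B] .
  have "f \<in> ideal_gen n B \<longrightarrow> f \<in> ideal_gen n G" if "f \<in> polys n" for f
    using that
  proof (induction f rule: lt_induct)
    case zero
    show ?case by (simp add: ideal_gen.zero)
  next
    case (less f)
    show ?case
    proof
      assume fJ: "f \<in> ideal_gen n B"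
      obtain g where g: "g \<in> G" "g \<noteq> 0" "lm_dvd ord g f" using strong fJ less.hyps(2) by blast
      have gJ: "g \<in> ideal_gen n B" and g_polys: "g \<in> polys n" using g G J_polys by auto
      obtain u where u: "lt ord f = u + lt ord g"
        using g(3) unfolding lm_dvd_def pp_dvd_iff by (auto simp: add.commute)
      obtain k where k: "lc ord f = k * lc ord g"
        using g(3) unfolding lm_dvd_def by (metis dvdE mult.commute)
      have u_PP: "u \<in> PP n" using u lt_PP less.hyps PP_add_leftD by metis
      have "k \<noteq> 0" using k lc_nonzero[OF less.hyps] by auto
      let ?h = "monomial k u * g"
      have h_polys: "?h \<in> polys n" using polys_mult polys_monomial u_PP g_polys by blast
      have "?h \<noteq> 0" "lt ord ?h = lt ord f" "lc ord ?h = lc ord f"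
        using lt_monomial_mult[OF g_polys g(2) u_PP \<open>k \<noteq> 0\<close>] u k by auto
      then have "f - ?h = 0 \<or> less_ord (lt ord (f - ?h)) (lt ord f)"
        using lt_diff_less less.hyps h_polys by blast
      moreover have "f - ?h \<in> ideal_gen n B"
        using ideal_gen_diff[OF fJ ideal_gen_mult[OF gJ polys_monomial[OF u_PP]]] .
      ultimately have "f - ?h \<in> ideal_gen n G"
        using less.IH polys_diff less.hyps(1) h_polys by blast
      then have "(f - ?h) + monomial k u * g \<in> ideal_gen n G"
        by (rule ideal_gen.step[OF _ polys_monomial[OF u_PP] g(1)])
      then show "f \<in> ideal_gen n G" by simp
    qed
  qed
  then show "ideal_gen n B \<subseteq> ideal_gen n G" using J_polys by blast
qed

end

lemma lt_uminus: "lt ord (- f) = lt ord f" for f :: "'a::ab_group_add mpoly"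
  by (simp add: lt_def)

lemma lc_uminus: "lc ord (- f) = - lc ord f" for f :: "'a::ab_group_add mpoly"
  by (simp add: lc_def lt_uminus)

definition lead_terms :: "(pp \<Rightarrow> pp \<Rightarrow> bool) \<Rightarrow> ('a::zero) mpoly set \<Rightarrow> pp set" where
  "lead_terms ord I = {lt ord f | f. f \<in> I \<and> f \<noteq> 0}"

section \<open>A minimal strong Groebner basis over the integers\<close>

locale int_ideal = term_ord +
  fixes B :: "int mpoly set"
  assumes B_polys: "B \<subseteq> polys n"
begin

abbreviation J :: "int mpoly set" where
  "J \<equiv> ideal_gen n B"

lemma J_polys: "J \<subseteq> polys n"
  using ideal_gen_subset_polys[OF B_polys] .

lemma lead_terms_PP: "T \<in> lead_terms ord J \<Longrightarrow> T \<in> PP n"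
  using lt_PP J_polys unfolding lead_terms_def by blast

definition min_lc :: "pp \<Rightarrow> nat" where
  "min_lc T = (LEAST m. m > 0 \<and> (\<exists>f\<in>J. f \<noteq> 0 \<and> lt ord f = T \<and> lc ord f = int m))"

lemma min_lc_attained:
  assumes "T \<in> lead_terms ord J"
  shows "min_lc T > 0" "\<exists>f\<in>J. f \<noteq> 0 \<and> lt ord f = T \<and> lc ord f = int (min_lc T)"
proof -
  let ?P = "\<lambda>m. m > 0 \<and> (\<exists>f\<in>J. f \<noteq> 0 \<and> lt ord f = T \<and> lc ord f = int m)"
  obtain f where f: "f \<in> J" "f \<noteq> 0" "lt ord f = T"
    using assms unfolding lead_terms_def by blast
  have minus: "- f \<in> J" "- f \<noteq> 0" "lt ord (- f) = T" "lc ord (- f) = - lc ord f"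
    using f ideal_gen_uminus lt_uminus lc_uminus by auto
  have "lc ord f \<noteq> 0" using lc_nonzero f J_polys by blast
  have "?P (nat \<bar>lc ord f\<bar>)"
  proof (cases "lc ord f > 0")
    case True
    then show ?thesis using f by (intro conjI bexI[of _ f]) auto
  next
    case False
    then show ?thesis using minus \<open>lc ord f \<noteq> 0\<close> by (intro conjI bexI[of _ "- f"]) auto
  qed
  then have "?P (min_lc T)" unfolding min_lc_def by (rule LeastI)
  then show "min_lc T > 0" "\<exists>f\<in>J. f \<noteq> 0 \<and> lt ord f = T \<and> lc ord f = int (min_lc T)"
    by auto
qed

text \<open>The remainder of lc(g) modulo min_lc(T) is again a leading coefficient at T, unless it
  vanishes.\<close>
lemma min_lc_dvd_lc:
  assumes g: "g \<in> J" "g \<noteq> 0"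
  shows "int (min_lc (lt ord g)) dvd lc ord g"
proof (rule ccontr)
  assume not_dvd: "\<not> int (min_lc (lt ord g)) dvd lc ord g"
  define T where "T = lt ord g"
  have T: "T \<in> lead_terms ord J" using g unfolding lead_terms_def T_def by blast
  obtain f where f: "f \<in> J" "f \<noteq> 0" "lt ord f = T" "lc ord f = int (min_lc T)"
    using min_lc_attained(2)[OF T] by blast
  define d where "d = int (min_lc T)"
  define r where "r = lc ord g mod d"
  have "d > 0" using min_lc_attained(1)[OF T] d_def by simp
  moreover have "r \<noteq> 0" using not_dvd unfolding r_def d_def T_def by (simp add: dvd_eq_mod_eq_0)
  ultimately have r: "0 < r" "r < d" unfolding r_def by (simp_all add: order_le_neq_trans)
  define h where "h = g - monomial (lc ord g div d) 0 * f"
  have hJ: "h \<in> J"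
    unfolding h_def by (intro ideal_gen_diff g ideal_gen_mult f polys_monomial PP_zero)
  have h_polys: "h \<in> polys n" using hJ J_polys by blast
  have "lookup h T = lc ord g - (lc ord g div d) * d"
    unfolding h_def using f T_def by (simp add: lookup_minus lc_def d_def)
  then have lookup_h: "lookup h T = r" unfolding r_def by (simp add: minus_div_mult_eq_mod)
  have "ord k T" if "k \<in> keys h" for k
  proof -
    have "k \<in> keys g \<or> k \<in> keys f"
      using that keys_diff[of g] keys_const_mult[of "lc ord g div d" f] unfolding h_def by blast
    then show ?thesis using ord_lt[of g k] ord_lt[of f k] f g J_polys T_def by auto
  qed
  then have lt_h: "lt ord h = T" using lt_eqI[OF h_polys] lookup_h r(1) by simp
  have "h \<noteq> 0" using lookup_h r(1) by auto
  then have "min_lc T \<le> nat r"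
    unfolding min_lc_def using hJ lt_h lookup_h r(1)
    by (intro Least_le conjI bexI[of _ h]) (auto simp: lc_def)
  then show False using r d_def by linarith
qed

lemma lead_terms_pp_dvd:
  assumes "T' \<in> lead_terms ord J" "pp_dvd T' T" "T \<in> PP n"
  shows "T \<in> lead_terms ord J" "min_lc T dvd min_lc T'"
proof -
  obtain f where f: "f \<in> J" "f \<noteq> 0" "lt ord f = T'" "lc ord f = int (min_lc T')"
    using min_lc_attained(2)[OF assms(1)] by blast
  obtain u where u: "T = u + T'" using assms(2) pp_dvd_iff by (metis add.commute)
  have u_PP: "u \<in> PP n" using u assms(3) PP_add_leftD by blast
  let ?g = "monomial 1 u * f"
  have gJ: "?g \<in> J" using ideal_gen_mult[OF f(1) polys_monomial[OF u_PP]] .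
  have g: "?g \<noteq> 0" "lt ord ?g = T" "lc ord ?g = int (min_lc T')"
    using lt_monomial_mult[OF _ f(2) u_PP, of 1] f u J_polys by auto
  then show "T \<in> lead_terms ord J" using gJ unfolding lead_terms_def by blast
  show "min_lc T dvd min_lc T'" using min_lc_dvd_lc[OF gJ g(1)] g by simp
qed

definition essential :: "pp \<Rightarrow> bool" where
  "essential T \<longleftrightarrow> T \<in> lead_terms ord J \<and>
     (\<forall>T'. pp_dvd T' T \<and> T' \<noteq> T \<and> T' \<in> lead_terms ord J \<longrightarrow> min_lc T' \<noteq> min_lc T)"

definition min_lc_witness :: "pp \<Rightarrow> int mpoly" where
  "min_lc_witness T = (SOME f. f \<in> J \<and> f \<noteq> 0 \<and> lt ord f = T \<and> lc ord f = int (min_lc T))"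

lemma min_lc_witnessD:
  assumes "T \<in> lead_terms ord J"
  shows "min_lc_witness T \<in> J" "min_lc_witness T \<noteq> 0" "lt ord (min_lc_witness T) = T"
    "lc ord (min_lc_witness T) = int (min_lc T)"
proof -
  have "\<exists>f. f \<in> J \<and> f \<noteq> 0 \<and> lt ord f = T \<and> lc ord f = int (min_lc T)"
    using min_lc_attained(2)[OF assms] by blast
  then have "min_lc_witness T \<in> J \<and> min_lc_witness T \<noteq> 0 \<and> lt ord (min_lc_witness T) = T \<and>
      lc ord (min_lc_witness T) = int (min_lc T)"
    unfolding min_lc_witness_def by (rule someI_ex)
  then show "min_lc_witness T \<in> J" "min_lc_witness T \<noteq> 0" "lt ord (min_lc_witness T) = T"
    "lc ord (min_lc_witness T) = int (min_lc T)" by auto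
qed

definition int_basis :: "int mpoly set" where
  "int_basis = min_lc_witness ` {T. essential T}"

lemma int_basis_lc:
  assumes "g \<in> int_basis"
  shows "\<exists>T\<in>lead_terms ord J. lc ord g = int (min_lc T)"
proof -
  obtain T where T: "essential T" "g = min_lc_witness T" using assms unfolding int_basis_def by blast
  then have "T \<in> lead_terms ord J" unfolding essential_def by simp
  then show ?thesis using min_lc_witnessD(4) T(2) by fast
qed

lemma essential_finite: "finite {T. essential T}"
proof (rule ccontr)
  assume "infinite {T. essential T}"
  then obtain F :: "nat \<Rightarrow> pp" where F: "inj F" "range F \<subseteq> {T. essential T}"
    using infinite_iff_countable_subset[THEN iffD1] by blast
  have F_ess: "essential (F i)" for i using F(2) by auto
  then have F_lt: "F i \<in> lead_terms ord J" for i unfolding essential_def by simp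
  have F_PP: "F i \<in> PP n" for i using lead_terms_PP[OF F_lt] .
  obtain H where H: "infinite H" "\<forall>i\<in>H. \<forall>j\<in>H. i < j \<longrightarrow> pp_dvd (F i) (F j)"
    using dickson[of UNIV F n] F_PP by blast
  have "min_lc (F j) < min_lc (F i)" if "i \<in> H" "j \<in> H" "i < j" for i j
  proof -
    have dvd: "pp_dvd (F i) (F j)" using H(2) that by simp
    have "F i \<noteq> F j" using F(1) that by (auto dest: injD)
    then have "min_lc (F i) \<noteq> min_lc (F j)"
      using F_ess[of j] F_lt[of i] dvd unfolding essential_def by simp
    moreover have "min_lc (F j) dvd min_lc (F i)"
      using lead_terms_pp_dvd(2)[OF F_lt dvd lead_terms_PP[OF F_lt]] .
    ultimately show ?thesis
      using min_lc_attained(1)[OF F_lt[of i]] dvd_imp_le le_neq_implies_less by metis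
  qed
  then show False using exists_nondecreasing_pair[OF H(1), of "\<lambda>i. min_lc (F i)"] leD by blast
qed

text \<open>A divisor of lt(f) that is minimal for the term order among those with the same minimal
  leading coefficient is essential.\<close>
lemma int_basis_strong:
  assumes "f \<in> J" "f \<noteq> 0"
  shows "\<exists>g\<in>int_basis. g \<noteq> 0 \<and> lm_dvd ord g f"
proof -
  define T where "T = lt ord f"
  have T: "T \<in> lead_terms ord J" using assms unfolding lead_terms_def T_def by blast
  define S where "S = {T'. pp_dvd T' T \<and> T' \<in> lead_terms ord J \<and> min_lc T' = min_lc T}"
  have "T \<in> S" using T pp_dvd_refl S_def by blast
  then obtain T0 where T0: "T0 \<in> S" "\<And>T'. (T', T0) \<in> less_ord_rel \<Longrightarrow> T' \<notin> S"
    using wfE_min[OF wf_less_ord_rel] by metis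
  have T0_S: "pp_dvd T0 T" "T0 \<in> lead_terms ord J" "min_lc T0 = min_lc T"
    using T0(1) S_def by auto
  have "essential T0" unfolding essential_def
  proof (intro conjI allI impI T0_S)
    fix T' assume T': "pp_dvd T' T0 \<and> T' \<noteq> T0 \<and> T' \<in> lead_terms ord J"
    have "T' \<in> PP n" "T0 \<in> PP n" using T' T0_S(2) lead_terms_PP by auto
    then have "(T', T0) \<in> less_ord_rel"
      using T' ord_of_pp_dvd[of T' T0] unfolding less_ord_rel_def less_ord_def by auto
    moreover have "pp_dvd T' T" using T' T0_S(1) pp_dvd_trans by blast
    ultimately show "min_lc T' \<noteq> min_lc T0" using T0(2) T' T0_S(3) unfolding S_def by auto
  qed
  then have "min_lc_witness T0 \<in> int_basis" unfolding int_basis_def by blast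
  moreover have "lc ord (min_lc_witness T0) dvd lc ord f"
    using min_lc_witnessD(4)[OF T0_S(2)] T0_S(3) min_lc_dvd_lc[OF assms] T_def by simp
  ultimately show ?thesis
    using min_lc_witnessD[OF T0_S(2)] T0_S(1) T_def unfolding lm_dvd_def by auto
qed

lemma int_basis_antichain:
  assumes "g \<in> int_basis" "g' \<in> int_basis" "g \<noteq> g'"
  shows "\<not> lm_dvd ord g g'"
proof
  assume lm: "lm_dvd ord g g'"
  obtain T1 T2 where T: "essential T1" "essential T2" "g = min_lc_witness T1" "g' = min_lc_witness T2"
    using assms(1,2) unfolding int_basis_def by auto
  have lt: "T1 \<in> lead_terms ord J" "T2 \<in> lead_terms ord J" using T unfolding essential_def by auto
  have dvd: "pp_dvd T1 T2" "min_lc T1 dvd min_lc T2"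
    using lm min_lc_witnessD[OF lt(1)] min_lc_witnessD[OF lt(2)] T unfolding lm_dvd_def by auto
  moreover have "min_lc T2 dvd min_lc T1"
    using lead_terms_pp_dvd(2)[OF lt(1) dvd(1) lead_terms_PP[OF lt(2)]] .
  ultimately have "min_lc T1 = min_lc T2" using dvd_antisym by blast
  then show False using T assms(3) dvd(1) lt(1) unfolding essential_def by blast
qed

lemma int_basis_minimal_strong_GB: "minimal_strong_GB n ord int_basis J"
proof -
  have basis: "g \<in> J \<and> g \<noteq> 0" if g: "g \<in> int_basis" for g
  proof -
    obtain T where "essential T" "g = min_lc_witness T" using g unfolding int_basis_def by blast
    then show ?thesis using min_lc_witnessD(1,2) unfolding essential_def by simp
  qed
  then have sub: "int_basis \<subseteq> J" by blast
  have "ideal_gen n int_basis = J"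
    by (rule ideal_gen_strong_basis[OF B_polys sub int_basis_strong])
  moreover have "finite int_basis" unfolding int_basis_def using essential_finite by simp
  moreover have "\<forall>f\<in>J. f \<noteq> 0 \<longrightarrow> (\<exists>g\<in>int_basis. lm_dvd ord g f)"
    using int_basis_strong by blast
  moreover have "\<forall>g\<in>int_basis. \<forall>g'\<in>int_basis. g \<noteq> g' \<longrightarrow> \<not> lm_dvd ord g g'"
    using int_basis_antichain by blast
  ultimately show ?thesis
    unfolding minimal_strong_GB_def strong_GB_def using basis sub J_polys by blast
qed
end

definition of_int_poly :: "int mpoly \<Rightarrow> rat mpoly" where
  "of_int_poly f = Poly_Mapping.map of_int f"

lemma lookup_map: "g 0 = 0 \<Longrightarrow> lookup (Poly_Mapping.map g f) t = g (lookup f t)"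
  by (simp add: Poly_Mapping.map.rep_eq when_def)

lemma lookup_of_int_poly [simp]: "lookup (of_int_poly f) t = of_int (lookup f t)"
  by (simp add: of_int_poly_def lookup_map)

lemma keys_of_int_poly [simp]: "keys (of_int_poly f) = keys f"
  by (auto simp: in_keys_iff)

lemma of_int_poly_eq_0_iff [simp]: "of_int_poly f = 0 \<longleftrightarrow> f = 0"
  by (auto simp: poly_mapping_eq_iff fun_eq_iff)

lemma of_int_poly_0 [simp]: "of_int_poly 0 = 0"
  by simp

lemma of_int_poly_add: "of_int_poly (f + g) = of_int_poly f + of_int_poly g"
  by (simp add: poly_mapping_eq_iff fun_eq_iff lookup_add)

lemma of_int_poly_monomial: "of_int_poly (monomial c s) = monomial (of_int c) s"
  by (simp add: poly_mapping_eq_iff fun_eq_iff lookup_single when_def)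

lemma of_int_poly_mult: "of_int_poly (f * g) = of_int_poly f * of_int_poly g"
proof (rule poly_mapping_eqI)
  fix k
  have Sum_any_of_int: "(of_int (Sum_any h) :: rat) = Sum_any (\<lambda>a. of_int (h a))" for h :: "pp \<Rightarrow> int"
    by (simp add: Sum_any.expand_set)
  have of_int_when: "(of_int (a when P) :: rat) = (of_int a when P)" for a P
    by (simp add: when_def)
  have "lookup (of_int_poly (f * g)) k = of_int (Sum_any (\<lambda>l. lookup f l * Sum_any (\<lambda>q. lookup g q when k = l + q)))"
    by (simp add: lookup_mult)
  also have "\<dots> = Sum_any (\<lambda>l. of_int (lookup f l) * Sum_any (\<lambda>q. of_int (lookup g q) when k = l + q))"
    by (simp add: Sum_any_of_int of_int_when)
  also have "\<dots> = lookup (of_int_poly f * of_int_poly g) k"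
    by (simp add: lookup_mult)
  finally show "lookup (of_int_poly (f * g)) k = lookup (of_int_poly f * of_int_poly g) k" .
qed

lemma of_int_poly_polys: "f \<in> polys n \<Longrightarrow> of_int_poly f \<in> polys n"
  by (simp add: polys_def)

lemma lt_of_int_poly: "lt ord (of_int_poly f) = lt ord f"
  by (simp add: lt_def)

lemma lc_of_int_poly: "lc ord (of_int_poly f) = of_int (lc ord f)"
  by (simp add: lc_def lt_def)

section \<open>p-integral rationals\<close>

definition p_integral :: "nat \<Rightarrow> rat \<Rightarrow> bool" where
  "p_integral p x \<longleftrightarrow> (\<exists>a b. \<not> int p dvd b \<and> x = of_int a / of_int b)"

definition p_integral_poly :: "nat \<Rightarrow> rat mpoly \<Rightarrow> bool" where
  "p_integral_poly p f \<longleftrightarrow> (\<forall>t. p_integral p (lookup f t))"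

lemma p_integral_of_int: "prime p \<Longrightarrow> p_integral p (of_int a)"
  unfolding p_integral_def by (rule exI[of _ a], rule exI[of _ 1]) auto

lemma p_integral_fraction:
  assumes "prime p" "p_integral p x" "p_integral p y"
  shows "\<exists>a c b d. \<not> int p dvd b * d \<and> x = of_int a / of_int b \<and> y = of_int c / of_int d"
proof -
  obtain a b c d where "\<not> int p dvd b" "\<not> int p dvd d" "x = of_int a / of_int b" "y = of_int c / of_int d"
    using assms(2,3) unfolding p_integral_def by blast
  moreover have "prime (int p)" using assms(1) by simp
  ultimately show ?thesis using prime_dvd_mult_iff by blast
qed

lemma p_integral_add: "prime p \<Longrightarrow> p_integral p x \<Longrightarrow> p_integral p y \<Longrightarrow> p_integral p (x + y)"
proof -
  assume "prime p" "p_integral p x" "p_integral p y"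
  then obtain a c b d where "\<not> int p dvd b * d" "x = of_int a / of_int b" "y = of_int c / of_int d"
    using p_integral_fraction by blast
  moreover from this have "b \<noteq> 0" "d \<noteq> 0" by auto
  ultimately show ?thesis
    unfolding p_integral_def by (intro exI[of _ "a * d + c * b"] exI[of _ "b * d"]) (simp add: field_simps)
qed

lemma p_integral_mult: "prime p \<Longrightarrow> p_integral p x \<Longrightarrow> p_integral p y \<Longrightarrow> p_integral p (x * y)"
proof -
  assume "prime p" "p_integral p x" "p_integral p y"
  then obtain a c b d where "\<not> int p dvd b * d" "x = of_int a / of_int b" "y = of_int c / of_int d"
    using p_integral_fraction by blast
  then show ?thesis
    unfolding p_integral_def by (intro exI[of _ "a * c"] exI[of _ "b * d"]) simp
qed

lemma p_integral_diff: "prime p \<Longrightarrow> p_integral p x \<Longrightarrow> p_integral p y \<Longrightarrow> p_integral p (x - y)"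
  using p_integral_add[of p x "- y"] p_integral_mult[of p "- 1" y] p_integral_of_int[of p "- 1"]
  by simp

lemma p_integral_divide:
  assumes "prime p" "p_integral p x" "\<not> int p dvd b"
  shows "p_integral p (x / of_int b)"
proof -
  have "p_integral p (1 / of_int b)"
    unfolding p_integral_def using assms(3) by (intro exI[of _ 1] exI[of _ b]) simp
  then show ?thesis using p_integral_mult[OF assms(1,2)] by (simp add: divide_inverse)
qed

lemma p_integral_denom_not_dvd:
  assumes "p_integral p x"
  shows "\<not> int p dvd snd (quotient_of x)"
proof
  assume p_dvd: "int p dvd snd (quotient_of x)"
  obtain a b where x: "\<not> int p dvd b" "x = of_int a / of_int b"
    using assms unfolding p_integral_def by blast
  obtain a' b' where q: "quotient_of x = (a', b')" by fastforce
  then have x': "x = of_int a' / of_int b'" "b' > 0" "coprime a' b'"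
    using quotient_of_div quotient_of_denom_pos quotient_of_coprime by auto
  have "b \<noteq> 0" using x(1) by auto
  then have "a' * b = a * b'"
    using x x' by (simp add: field_simps) (metis of_int_eq_iff of_int_mult)
  then have "b' dvd b"
    using x'(3) by (metis coprime_commute coprime_dvd_mult_right_iff dvd_triv_right)
  then show False using p_dvd q x(1) dvd_trans by auto
qed

lemma the_int_of_int [simp]: "the_int (of_int k) = k"
  unfolding the_int_def by (rule the_equality) auto

lemma the_int_0 [simp]: "the_int 0 = 0"
  using the_int_of_int[of 0] by simp

lemma den_pos: "den f > 0"
proof -
  have "0 \<notin> (\<lambda>t. snd (quotient_of (lookup f t))) ` keys f"
    using quotient_of_denom_pos' by (auto simp: less_le)
  then show ?thesis unfolding den_def by (simp add: Lcm_0_iff less_le)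
qed

lemma denom_dvd_den: "snd (quotient_of (lookup f t)) dvd den f"
  by (cases "t \<in> keys f") (auto simp: den_def in_keys_iff)

lemma den_mult_coeff_int: "\<exists>K. of_int (den f) * lookup f t = (of_int K :: rat)"
proof -
  obtain a b where q: "quotient_of (lookup f t) = (a, b)" by fastforce
  then have "lookup f t = of_int a / of_int b" "b > 0"
    using quotient_of_div quotient_of_denom_pos by auto
  moreover obtain k where "den f = b * k" using denom_dvd_den[of f t] q by auto
  ultimately show ?thesis by (intro exI[of _ "a * k"]) simp
qed

lemma not_dvd_Lcm:
  fixes A :: "int set"
  assumes "prime p" "finite A" "\<forall>a\<in>A. \<not> int p dvd a"
  shows "\<not> int p dvd Lcm A"
proof
  assume "int p dvd Lcm A"
  moreover have "Lcm A dvd prod id A"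
    using dvd_prodI[OF assms(2)] by (intro Lcm_least) simp
  ultimately have "int p dvd prod id A" by (rule dvd_trans)
  then show False using assms prime_dvd_prod_iff[of A "int p" id] by simp
qed

lemma not_dvd_den_of_p_integral: "prime p \<Longrightarrow> p_integral_poly p f \<Longrightarrow> \<not> int p dvd den f"
  unfolding den_def p_integral_poly_def by (intro not_dvd_Lcm) (auto simp: p_integral_denom_not_dvd)

lemma not_dvd_den_set_iff:
  assumes "prime p" "finite G"
  shows "\<not> int p dvd den_set G \<longleftrightarrow> (\<forall>g\<in>G. \<not> int p dvd den g)"
proof
  assume "\<not> int p dvd den_set G"
  then show "\<forall>g\<in>G. \<not> int p dvd den g"
    unfolding den_set_def by (meson dvd_Lcm dvd_trans imageI)
next
  assume "\<forall>g\<in>G. \<not> int p dvd den g"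
  then show "\<not> int p dvd den_set G" unfolding den_set_def using assms by (intro not_dvd_Lcm) auto
qed

definition int_coeff :: "rat mpoly \<Rightarrow> pp \<Rightarrow> int" where
  "int_coeff f t = the_int (of_int (den f) * lookup f t)"

lemma of_int_int_coeff: "of_int (int_coeff f t) = of_int (den f) * lookup f t"
  using den_mult_coeff_int[of f t] by (auto simp: int_coeff_def)

lemma icontent_pos: "f \<noteq> 0 \<Longrightarrow> icontent f > 0"
proof -
  assume "f \<noteq> 0"
  then obtain t where t: "t \<in> keys f" by fastforce
  then have "int_coeff f t \<noteq> 0"
    using of_int_int_coeff[of f t] den_pos[of f] by (auto simp: in_keys_iff)
  then have "icontent f \<noteq> 0"
    using t unfolding icontent_def int_coeff_def[symmetric] by auto
  then show ?thesis unfolding icontent_def by (simp add: less_le)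
qed

lemma icontent_dvd: "icontent f dvd int_coeff f t"
proof (cases "t \<in> keys f")
  case True
  then show ?thesis unfolding icontent_def int_coeff_def by (intro Gcd_dvd) simp
next
  case False
  then have "int_coeff f t = 0" using of_int_int_coeff[of f t] by (simp add: in_keys_iff)
  then show ?thesis by simp
qed

definition prim_factor :: "rat mpoly \<Rightarrow> rat" where
  "prim_factor f = of_int (den f) / of_int (icontent f)"

lemma lookup_prim: "of_int (lookup (prim f) t) = prim_factor f * lookup f t"
proof -
  have prim: "lookup (prim f) t = the_int (of_int (den f) * lookup f t / of_int (icontent f))"
    unfolding prim_def by (rule lookup_map) simp
  show ?thesis
  proof (cases "f = 0")
    case False
    obtain q where "int_coeff f t = icontent f * q" using icontent_dvd[of f t] by (rule dvdE)
    then have "of_int (den f) * lookup f t = of_int (icontent f) * (of_int q :: rat)"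
      using of_int_int_coeff[of f t] by (metis of_int_mult)
    moreover have "(of_int (icontent f) :: rat) \<noteq> 0" using icontent_pos[OF False] by simp
    ultimately have "of_int (den f) * lookup f t / of_int (icontent f) = (of_int q :: rat)"
      by (simp add: field_simps)
    then show ?thesis using prim \<open>of_int (icontent f) \<noteq> 0\<close>
      by (simp add: prim_factor_def field_simps)
  qed (use prim in simp)
qed

lemma of_int_poly_prim: "of_int_poly (prim f) = monomial (prim_factor f) 0 * f"
  by (rule poly_mapping_eqI) (simp add: lookup_prim)

lemma prim_factor_nonzero: "f \<noteq> 0 \<Longrightarrow> prim_factor f \<noteq> 0"
  unfolding prim_factor_def using den_pos[of f] icontent_pos[of f] by simp

lemma keys_prim:
  assumes "f \<noteq> 0"
  shows "keys (prim f) = keys f"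
proof -
  have "lookup (prim f) t = 0 \<longleftrightarrow> lookup f t = 0" for t
  proof -
    have "lookup (prim f) t = 0 \<longleftrightarrow> (of_int (lookup (prim f) t) :: rat) = 0" by simp
    also have "\<dots> \<longleftrightarrow> lookup f t = 0"
      using lookup_prim[of f t] prim_factor_nonzero[OF assms] by simp
    finally show ?thesis .
  qed
  then show ?thesis by (simp add: set_eq_iff in_keys_iff)
qed

lemma prim_nonzero:
  assumes "f \<noteq> 0"
  shows "prim f \<noteq> 0"
proof
  assume "prim f = 0"
  then have "keys f = {}" using keys_prim[OF assms] by simp
  then show False using assms by simp
qed

lemma prim_polys: "f \<in> polys n \<Longrightarrow> f \<noteq> 0 \<Longrightarrow> prim f \<in> polys n"
  by (simp add: polys_def keys_prim)

lemma lt_prim: "f \<noteq> 0 \<Longrightarrow> lt ord (prim f) = lt ord f"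
  by (simp add: lt_def keys_prim)

text \<open>For monic f the leading coefficient of prim(f) is den(f)/icontent(f).\<close>
lemma lc_prim_dvd_den:
  assumes "f \<noteq> 0" "lc ord f = 1"
  shows "lc ord (prim f) dvd den f"
proof -
  have "of_int (lc ord (prim f)) = prim_factor f"
    using lookup_prim[of f "lt ord f"] assms by (simp add: lc_def lt_prim)
  then have "of_int (lc ord (prim f) * icontent f) = (of_int (den f) :: rat)"
    using icontent_pos[OF assms(1)] unfolding prim_factor_def by simp
  then have "den f = lc ord (prim f) * icontent f" by (simp only: of_int_eq_iff)
  then show ?thesis by (rule dvdI)
qed

definition clear_den :: "rat mpoly \<Rightarrow> int mpoly" where
  "clear_den h = Poly_Mapping.map (\<lambda>a. the_int (of_int (den h) * a)) h"

lemma of_int_poly_clear_den: "of_int_poly (clear_den h) = monomial (of_int (den h)) 0 * h"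
proof (rule poly_mapping_eqI)
  fix t
  have "lookup (clear_den h) t = int_coeff h t"
    unfolding clear_den_def int_coeff_def by (rule lookup_map) simp
  then show "lookup (of_int_poly (clear_den h)) t = lookup (monomial (of_int (den h)) 0 * h) t"
    by (simp add: of_int_int_coeff del: single_of_int)
qed

lemma clear_den_polys: "h \<in> polys n \<Longrightarrow> clear_den h \<in> polys n"
proof -
  have "keys (clear_den h) \<subseteq> keys h"
    unfolding clear_den_def by (auto simp: in_keys_iff Poly_Mapping.map.rep_eq when_def)
  then show "h \<in> polys n \<Longrightarrow> clear_den h \<in> polys n" by (auto simp: polys_def)
qed

context term_ord
begin

text \<open>Reduce by monic p-integral elements, one leading term at a time.\<close>
lemma p_integral_poly_of_lead_terms:
  fixes B :: "rat mpoly set"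
  assumes p: "prime p" and B: "B \<subseteq> polys n"
    and monic: "\<And>T. T \<in> lead_terms ord (ideal_gen n B) \<Longrightarrow>
      \<exists>e\<in>ideal_gen n B. e \<noteq> 0 \<and> lt ord e = T \<and> lc ord e = 1 \<and> p_integral_poly p e"
    and r: "r \<in> ideal_gen n B"
    and at_lead_terms: "\<forall>t\<in>lead_terms ord (ideal_gen n B). p_integral p (lookup r t)"
  shows "p_integral_poly p r"
proof -
  let ?J = "ideal_gen n B"
  have J_polys: "?J \<subseteq> polys n" using ideal_gen_subset_polys[OF B] .
  have "r \<in> polys n" using r J_polys by blast
  then have "r \<in> ?J \<longrightarrow> (\<forall>t\<in>lead_terms ord ?J. p_integral p (lookup r t)) \<longrightarrow> p_integral_poly p r"
  proof (induction r rule: lt_induct)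
    case zero
    show ?case using p_integral_of_int[OF p, of 0] by (simp add: p_integral_poly_def)
  next
    case (less r)
    show ?case
    proof (intro impI)
      assume rJ: "r \<in> ?J" and r_lt: "\<forall>t\<in>lead_terms ord ?J. p_integral p (lookup r t)"
      have T: "lt ord r \<in> lead_terms ord ?J" using rJ less.hyps(2) unfolding lead_terms_def by blast
      then obtain e where e: "e \<in> ?J" "e \<noteq> 0" "lt ord e = lt ord r" "lc ord e = 1" "p_integral_poly p e"
        using monic by blast
      define c where "c = lc ord r"
      have c: "p_integral p c" using r_lt T unfolding c_def lc_def by blast
      have "c \<noteq> 0" using lc_nonzero less.hyps unfolding c_def by blast
      let ?h = "monomial c 0 * e"
      have e_polys: "e \<in> polys n" using subsetD[OF J_polys e(1)] .
      have h_polys: "?h \<in> polys n" using polys_mult[OF polys_monomial[OF PP_zero] e_polys] .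
      have hJ: "?h \<in> ?J" using ideal_gen_mult[OF e(1) polys_monomial[OF PP_zero]] .
      have "?h \<noteq> 0" "lt ord ?h = lt ord r" "lc ord ?h = lc ord r"
        using lt_monomial_mult[OF e_polys e(2) PP_zero \<open>c \<noteq> 0\<close>] e c_def by auto
      then have "r - ?h = 0 \<or> less_ord (lt ord (r - ?h)) (lt ord r)"
        using lt_diff_less less.hyps h_polys by blast
      moreover have "r - ?h \<in> ?J" using ideal_gen_diff[OF rJ hJ] .
      moreover have "\<forall>t\<in>lead_terms ord ?J. p_integral p (lookup (r - ?h) t)"
        using r_lt e(5) c p_integral_diff[OF p] p_integral_mult[OF p]
        by (simp add: lookup_minus p_integral_poly_def)
      ultimately have "p_integral_poly p (r - ?h)"
        using less.IH polys_diff less.hyps(1) h_polys by blast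
      have "p_integral p (lookup r t)" for t
      proof -
        have "p_integral p (lookup (r - ?h) t)" "p_integral p (lookup e t)"
          using \<open>p_integral_poly p (r - ?h)\<close> e(5) unfolding p_integral_poly_def by blast+
        moreover have "lookup r t = lookup (r - ?h) t + c * lookup e t" by (simp add: lookup_minus)
        ultimately show ?thesis using c by (simp add: p_integral_add[OF p] p_integral_mult[OF p])
      qed
      then show "p_integral_poly p r" unfolding p_integral_poly_def ..
    qed
  qed
  then show ?thesis using r at_lead_terms by blast
qed

end

section \<open>The reduced rational basis and its primitive parts\<close>

locale reduced_basis = term_ord +
  fixes F G :: "rat mpoly set"
  assumes reduced: "reduced_GB n ord G (ideal_gen n F)"
begin

lemma G_reduced: "finite G" "0 \<notin> G" "G \<subseteq> polys n" "ideal_gen n G = ideal_gen n F"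
  "\<And>f. f \<in> ideal_gen n F \<Longrightarrow> f \<noteq> 0 \<Longrightarrow> \<exists>g\<in>G. lm_dvd ord g f"
  "\<And>g. g \<in> G \<Longrightarrow> lc ord g = 1"
  "\<And>g g' t. g \<in> G \<Longrightarrow> g' \<in> G \<Longrightarrow> g \<noteq> g' \<Longrightarrow> t \<in> keys g \<Longrightarrow> \<not> pp_dvd (lt ord g') t"
  using reduced unfolding reduced_GB_def strong_GB_def by blast+

abbreviation Q :: "rat mpoly set" where
  "Q \<equiv> ideal_gen n G"

lemma Q_polys: "Q \<subseteq> polys n"
  using ideal_gen_subset_polys[OF G_reduced(3)] .

lemma lead_term_dvd: "T \<in> lead_terms ord Q \<Longrightarrow> \<exists>g\<in>G. pp_dvd (lt ord g) T"
  using G_reduced(4,5) unfolding lead_terms_def lm_dvd_def by blast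

sublocale Z: int_ideal n ord "prim ` G"
  using G_reduced(2,3) prim_polys by unfold_locales blast

lemma of_int_poly_in_Q: "f \<in> Z.J \<Longrightarrow> of_int_poly f \<in> Q"
proof (induction f rule: ideal_gen.induct)
  case zero
  then show ?case by (simp add: ideal_gen.zero)
next
  case (step a h f)
  then obtain g where g: "g \<in> G" "f = prim g" by blast
  have "of_int_poly (a + h * f) = of_int_poly a + (of_int_poly h * monomial (prim_factor g) 0) * g"
    using g by (simp add: of_int_poly_add of_int_poly_mult of_int_poly_prim mult.assoc)
  moreover have "of_int_poly h * monomial (prim_factor g) 0 \<in> polys n"
    using step.hyps(2) by (intro polys_mult of_int_poly_polys polys_monomial PP_zero)
  ultimately show ?case using step.IH g(1) by (simp add: ideal_gen.step)
qed

lemma clear_denominators: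
  assumes "q \<in> Q"
  shows "\<exists>N::int. N \<noteq> 0 \<and> (\<exists>f\<in>Z.J. of_int_poly f = monomial (of_int N) 0 * q)"
  using assms
proof (induction q rule: ideal_gen.induct)
  case zero
  then show ?case by (intro exI[of _ 1] conjI bexI[of _ 0]) (auto intro: ideal_gen.zero)
next
  case (step a h g)
  obtain N fa where N: "N \<noteq> 0" "fa \<in> Z.J" "of_int_poly fa = monomial (of_int N) 0 * a"
    using step.IH by blast
  have "g \<noteq> 0" using step.hyps(3) G_reduced(2) by blast
  let ?S = "\<lambda>x::rat. monomial x (0::pp)"
  define D where "D = den h * den g"
  \<comment> \<open>den(h) h = clear_den(h) and den(g) g = icontent(g) prim(g) are integral.\<close>
  define f where "f = monomial D 0 * fa + (monomial (N * icontent g) 0 * clear_den h) * prim g"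
  have "f \<in> Z.J"
    unfolding f_def using step.hyps
    by (intro ideal_gen_add ideal_gen_mult ideal_gen_base N(2) polys_mult polys_monomial
        clear_den_polys PP_zero imageI)
  have scale:
    "of_int N * of_int (icontent g) * of_int (den h) * prim_factor g = (of_int D * of_int N :: rat)"
    using icontent_pos[OF \<open>g \<noteq> 0\<close>] unfolding prim_factor_def D_def by simp
  have "of_int_poly f = ?S (of_int D) * (?S (of_int N) * a)
      + (?S (of_int (N * icontent g)) * (?S (of_int (den h)) * h)) * (?S (prim_factor g) * g)"
    unfolding f_def
    by (simp add: of_int_poly_add of_int_poly_mult of_int_poly_monomial N(3) of_int_poly_clear_den
        of_int_poly_prim del: single_of_int)
  also have "\<dots> = ?S (of_int D * of_int N) * a
      + ?S (of_int (N * icontent g) * of_int (den h) * prim_factor g) * (h * g)"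
    by (simp only: mult_single mult_ac add_0)
  also have "\<dots> = ?S (of_int (D * N)) * (a + h * g)"
    by (simp only: scale of_int_mult distrib_left)
  finally show ?case using \<open>f \<in> Z.J\<close> N(1) \<open>g \<noteq> 0\<close> den_pos[of h] den_pos[of g] D_def
    by (intro exI[of _ "D * N"]) auto
qed

lemma lead_terms_eq: "lead_terms ord Z.J = lead_terms ord Q"
proof
  show "lead_terms ord Z.J \<subseteq> lead_terms ord Q"
    unfolding lead_terms_def using of_int_poly_in_Q by (force simp: lt_of_int_poly)
next
  show "lead_terms ord Q \<subseteq> lead_terms ord Z.J"
  proof
    fix T assume "T \<in> lead_terms ord Q"
    then obtain q where q: "q \<in> Q" "q \<noteq> 0" "lt ord q = T" unfolding lead_terms_def by blast
    obtain N f where N: "N \<noteq> 0" "f \<in> Z.J" "of_int_poly f = monomial (of_int N) 0 * q"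
      using clear_denominators[OF q(1)] by blast
    have "monomial (of_int N) 0 * q \<noteq> 0" "lt ord (monomial (of_int N) 0 * q) = T"
      using lt_monomial_mult[of q 0 "of_int N"] q Q_polys N(1) by auto
    then have "f \<noteq> 0" "lt ord f = T" using N(3) lt_of_int_poly[of ord f] by auto
    then show "T \<in> lead_terms ord Z.J" using N(2) unfolding lead_terms_def by blast
  qed
qed

lemma min_lc_dvd_den:
  assumes "T \<in> lead_terms ord Z.J"
  shows "\<exists>g\<in>G. int (Z.min_lc T) dvd den g"
proof -
  obtain g where g: "g \<in> G" "pp_dvd (lt ord g) T"
    using lead_term_dvd assms lead_terms_eq by blast
  have g_props: "g \<in> polys n" "g \<noteq> 0" "lc ord g = 1" using g(1) G_reduced by auto
  obtain u where u: "T = u + lt ord g" using g(2) pp_dvd_iff by (metis add.commute)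
  have u_PP: "u \<in> PP n" using u Z.lead_terms_PP[OF assms] PP_add_leftD by blast
  have prim_g: "prim g \<in> polys n" "prim g \<noteq> 0"
    using g_props prim_polys prim_nonzero by auto
  let ?e = "monomial 1 u * prim g"
  have eJ: "?e \<in> Z.J"
    using ideal_gen_mult[OF ideal_gen_base polys_monomial[OF u_PP]] g(1) by blast
  have e: "?e \<noteq> 0" "lt ord ?e = T" "lc ord ?e = lc ord (prim g)"
    using lt_monomial_mult[OF prim_g u_PP, of 1] lt_prim[OF g_props(2)] u by auto
  then have "int (Z.min_lc T) dvd lc ord (prim g)" using Z.min_lc_dvd_lc[OF eJ e(1)] by simp
  then show ?thesis using g(1) lc_prim_dvd_den[OF g_props(2,3)] dvd_trans by blast
qed

lemma good_imp_pauer_lucky: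
  assumes "\<forall>g\<in>G. \<not> int p dvd den g"
  shows "pauer_lucky n ord (prim ` G) p"
proof -
  have "\<not> int p dvd lc ord b" if b: "b \<in> Z.int_basis" for b
  proof
    assume "int p dvd lc ord b"
    obtain T where "T \<in> lead_terms ord Z.J" "lc ord b = int (Z.min_lc T)"
      using Z.int_basis_lc[OF b] by blast
    then show False using min_lc_dvd_den assms \<open>int p dvd lc ord b\<close> dvd_trans by metis
  qed
  then show ?thesis unfolding pauer_lucky_def using Z.int_basis_minimal_strong_GB by blast
qed

text \<open>Divide a basis element of Z.J with leading term dividing T by its leading coefficient,
  which is a unit at p.\<close>
lemma monic_p_integral:
  assumes p: "prime p" and Bt: "minimal_strong_GB n ord Bt Z.J"
    and lucky: "\<forall>b\<in>Bt. \<not> int p dvd lc ord b"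
    and T: "T \<in> lead_terms ord Q"
  shows "\<exists>e\<in>Q. e \<noteq> 0 \<and> lt ord e = T \<and> lc ord e = 1 \<and> p_integral_poly p e"
proof -
  have gen: "ideal_gen n Bt = Z.J" and Bt_props: "0 \<notin> Bt"
      "\<And>f. f \<in> Z.J \<Longrightarrow> f \<noteq> 0 \<Longrightarrow> \<exists>b\<in>Bt. lm_dvd ord b f"
    using Bt unfolding minimal_strong_GB_def strong_GB_def by blast+
  have Bt_J: "Bt \<subseteq> Z.J" unfolding gen[symmetric] by (auto intro: ideal_gen_base)
  have T_J: "T \<in> lead_terms ord Z.J" using T lead_terms_eq by simp
  then obtain f where f: "f \<in> Z.J" "f \<noteq> 0" "lt ord f = T" unfolding lead_terms_def by blast
  obtain b where b: "b \<in> Bt" "pp_dvd (lt ord b) T"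
    using Bt_props(2)[OF f(1,2)] f(3) unfolding lm_dvd_def by blast
  have b_J: "b \<in> Z.J" using Bt_J b(1) by blast
  have b_props: "b \<in> polys n" "b \<noteq> 0" using subsetD[OF Z.J_polys b_J] b(1) Bt_props(1) by auto
  obtain u where u: "T = u + lt ord b" using b(2) pp_dvd_iff by (metis add.commute)
  have u_PP: "u \<in> PP n" using u Z.lead_terms_PP[OF T_J] PP_add_leftD by blast
  define L where "L = lc ord b"
  have L: "L \<noteq> 0" "\<not> int p dvd L" using L_def lc_nonzero b_props lucky b(1) by auto
  let ?e = "monomial (1 / of_int L) u * of_int_poly b"
  have eQ: "?e \<in> Q"
    using ideal_gen_mult[OF of_int_poly_in_Q[OF b_J] polys_monomial[OF u_PP]] .
  have "?e \<noteq> 0" "lt ord ?e = T" "lc ord ?e = 1"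
    using lt_monomial_mult[of "of_int_poly b" u "1 / of_int L"] b_props u_PP u L(1)
    by (auto simp: of_int_poly_polys lt_of_int_poly lc_of_int_poly L_def)
  moreover have "p_integral_poly p ?e"
    unfolding p_integral_poly_def
  proof
    fix t
    have "1 / of_int L * of_int (lookup b (t - u)) = (of_int (lookup b (t - u)) / of_int L :: rat)"
      by simp
    then show "p_integral p (lookup ?e t)"
      using p_integral_divide[OF p p_integral_of_int[OF p] L(2)] p_integral_of_int[OF p, of 0]
      by (simp add: lookup_monomial_mult)
  qed
  ultimately show ?thesis using eQ by blast
qed

text \<open>By reducedness, no term of g other than lt(g) is a leading term of Q.\<close>
lemma reduced_lookup_lead_term:
  assumes "g \<in> G" "t \<in> lead_terms ord Q"
  shows "lookup g t = (if t = lt ord g then 1 else 0)"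
proof (cases "t = lt ord g")
  case True
  then show ?thesis using G_reduced(6)[OF assms(1)] by (simp add: lc_def)
next
  case False
  obtain g' where g': "g' \<in> G" "pp_dvd (lt ord g') t" using lead_term_dvd assms(2) by blast
  have "t \<notin> keys g"
  proof
    assume t: "t \<in> keys g"
    have g_polys: "g \<in> polys n" "g \<noteq> 0" using assms(1) G_reduced by auto
    then have t_PP: "t \<in> PP n" using t by (auto simp: polys_def)
    show False
    proof (cases "g' = g")
      case True
      then have "ord (lt ord g) t" using g' ord_of_pp_dvd t_PP by blast
      then show False
        using False ord_lt[OF g_polys(1) t] ord_antisym lt_PP[OF g_polys] t_PP by blast
    next
      case False
      then show False using G_reduced(7)[OF assms(1) g'(1) _ t] g'(2) by blast
    qed
  qed
  then show ?thesis using False by (simp add: in_keys_iff)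
qed

lemma pauer_lucky_imp_good:
  assumes p: "prime p" and "pauer_lucky n ord (prim ` G) p"
  shows "\<forall>g\<in>G. \<not> int p dvd den g"
proof
  fix g assume g: "g \<in> G"
  obtain Bt where "minimal_strong_GB n ord Bt Z.J" "\<forall>b\<in>Bt. \<not> int p dvd lc ord b"
    using assms(2) unfolding pauer_lucky_def by blast
  then have "p_integral_poly p g"
    using p_integral_poly_of_lead_terms[OF p G_reduced(3) monic_p_integral[OF p]]
      ideal_gen_base[OF g] reduced_lookup_lead_term[OF g] p_integral_of_int[OF p, of 0]
      p_integral_of_int[OF p, of 1]
    by simp
  then show "\<not> int p dvd den g" using not_dvd_den_of_p_integral[OF p] by blast
qed

end

theorem corollary3p19:
  fixes n :: nat and ord :: "pp \<Rightarrow> pp \<Rightarrow> bool"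
    and F G :: "rat mpoly set" and p :: nat
  assumes "term_order n ord"
    and "F \<subseteq> polys n" and "0 \<notin> F"
    and "reduced_GB n ord G (ideal_gen n F)"
    and "prime p"
  shows "pauer_lucky n ord (prim ` G) p \<longleftrightarrow> sigma_good G p"
proof -
  interpret reduced_basis n ord F G
    using assms(1,4) by unfold_locales
  show ?thesis
    unfolding sigma_good_def not_dvd_den_set_iff[OF \<open>prime p\<close> G_reduced(1)]
    using good_imp_pauer_lucky pauer_lucky_imp_good \<open>prime p\<close> by blast
qed

end
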